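(* Let $K$ be a field of characteristic $0$, $r\ge1$ an integer, $d$ the derivation of $K[a]$ with $d(a)=a^r$, and let $A=K[a][b;d]$ be the Ore extension, so $pb=bp+d(p)$ for $p\in K[a]$ (in particular $ab=ba+a^r$). Let $w=a$, which is normal, with associated automorphism $\sigma$ ($wy=\sigma(y)w$ for all $y\in A$) given by $\sigma(a)=a$, $\sigma(b)=b+a^{r-1}$. Let $J=A(a-1)$ and $x=b-1$, and $N=A/Ax$. Then: (a) $J$ is a maximal left ideal of $A$, and for every $m\ge 0$ there is no $c\in A$ with $\sigma^m(x)c-1\in J$; (b) $N$ is not artinian, and its nonzero submodules are exactly the modules $a^mN$, $m\ge0$, which form a strictly descending chain $N\supsetneq aN\supsetneq a^2N\supsetneq\cdots$; (c) the submodules $a^mN$ ($m\ge 0$) of $N$ are pairwise non-isomorphic. *)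

theory Defs
  imports "HOL-Computational_Algebra.Polynomial"
begin

text \<open>An element of A is represented in the normal form  sum_i b^i p_i(a)  (b-powers on the
  left, coefficients from K[a] on the right), encoded as a polynomial in b whose i-th
  coefficient is p_i :: 'k poly.  The defining relation is  p b = b p + d(p), whence
  p b^j = sum_k (j choose k) b^(j-k) d^k(p).\<close>

definition dA :: "nat \<Rightarrow> 'k::field_char_0 poly \<Rightarrow> 'k poly" where
  "dA r p = [:0, 1:] ^ r * pderiv p"

definition omult :: "nat \<Rightarrow> 'k::field_char_0 poly poly \<Rightarrow> 'k poly poly \<Rightarrow> 'k poly poly" where
  "omult r P Q = (\<Sum>i\<le>degree P. \<Sum>j\<le>degree Q. \<Sum>k\<le>j.
      monom (smult (of_nat (j choose k)) ((dA r ^^ k) (coeff P i) * coeff Q j)) (i + j - k))"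

definition ga :: "'k::field_char_0 poly poly" where
  "ga = [:[:0, 1:]:]"

definition gb :: "'k::field_char_0 poly poly" where
  "gb = [:0, 1:]"

definition opow :: "nat \<Rightarrow> 'k::field_char_0 poly poly \<Rightarrow> nat \<Rightarrow> 'k poly poly" where
  "opow r y m = (omult r y ^^ m) 1"

definition left_ideal :: "nat \<Rightarrow> 'k::field_char_0 poly poly set \<Rightarrow> bool" where
  "left_ideal r I \<longleftrightarrow> 0 \<in> I \<and> (\<forall>u\<in>I. \<forall>v\<in>I. u + v \<in> I) \<and> (\<forall>u\<in>I. - u \<in> I)
      \<and> (\<forall>c. \<forall>u\<in>I. omult r c u \<in> I)"

definition maximal_left_ideal :: "nat \<Rightarrow> 'k::field_char_0 poly poly set \<Rightarrow> bool" where
  "maximal_left_ideal r I \<longleftrightarrow> left_ideal r I \<and> I \<noteq> UNIV \<and>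
      (\<forall>L. left_ideal r L \<and> I \<subseteq> L \<longrightarrow> L = I \<or> L = UNIV)"

definition lprinc :: "nat \<Rightarrow> 'k::field_char_0 poly poly \<Rightarrow> 'k poly poly set" where
  "lprinc r y = {omult r c y | c. True}"

definition sigma :: "nat \<Rightarrow> 'k::field_char_0 poly poly \<Rightarrow> 'k poly poly" where
  "sigma r y = (THE z. omult r ga y = omult r z ga)"

definition qcoset :: "'k::field_char_0 poly poly set \<Rightarrow> 'k poly poly \<Rightarrow> 'k poly poly set" where
  "qcoset L u = {u + y | y. y \<in> L}"

definition qcarrier :: "'k::field_char_0 poly poly set \<Rightarrow> 'k poly poly set set" where
  "qcarrier L = range (qcoset L)"

definition qadd :: "'k::field_char_0 poly poly set \<Rightarrow> 'k poly poly set \<Rightarrow> 'k poly poly set" where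
  "qadd X Y = {u + v | u v. u \<in> X \<and> v \<in> Y}"

definition qsmult :: "nat \<Rightarrow> 'k::field_char_0 poly poly set \<Rightarrow> 'k poly poly \<Rightarrow> 'k poly poly set
    \<Rightarrow> 'k poly poly set" where
  "qsmult r L c X = {omult r c u + y | u y. u \<in> X \<and> y \<in> L}"

definition qsubmodule :: "nat \<Rightarrow> 'k::field_char_0 poly poly set \<Rightarrow> 'k poly poly set set \<Rightarrow> bool" where
  "qsubmodule r L S \<longleftrightarrow> S \<subseteq> qcarrier L \<and> qcoset L 0 \<in> S \<and>
     (\<forall>X\<in>S. \<forall>Y\<in>S. qadd X Y \<in> S) \<and> (\<forall>c. \<forall>X\<in>S. qsmult r L c X \<in> S)"

definition qartinian :: "nat \<Rightarrow> 'k::field_char_0 poly poly set \<Rightarrow> bool" where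
  "qartinian r L \<longleftrightarrow> (\<forall>S :: nat \<Rightarrow> 'k poly poly set set.
      (\<forall>n. qsubmodule r L (S n)) \<and> (\<forall>n. S (Suc n) \<subseteq> S n) \<longrightarrow> (\<exists>k. \<forall>n\<ge>k. S n = S k))"

definition qiso :: "nat \<Rightarrow> 'k::field_char_0 poly poly set \<Rightarrow> 'k poly poly set set
    \<Rightarrow> 'k poly poly set set \<Rightarrow> bool" where
  "qiso r L S T \<longleftrightarrow> (\<exists>f. bij_betw f S T \<and>
      (\<forall>X\<in>S. \<forall>Y\<in>S. f (qadd X Y) = qadd (f X) (f Y)) \<and>
      (\<forall>c. \<forall>X\<in>S. f (qsmult r L c X) = qsmult r L c (f X)))"

end

theory Submission
  imports Defs
begin

(* A acts on the right on K[a] by  f . (b^i p) = d^i(f) p  (ract); by the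
      Leibniz rule for the iterates of d this is an action, f . (PQ) = (f . P) . Q, and it
      is faithful, since commuting with a lowers the b-degree (here char K = 0 is used).
      Associativity and bilinearity of omult are then transferred from the action.
   2. Part (a).  A(a-1) consists of the elements whose coefficients vanish at a = 1.
      Modulo A(a-1), left multiplication by a-1 lowers the b-degree of an element of K[b],
      so every left ideal properly containing A(a-1) contains 1.  The automorphism sigma
      sends x = b-1 to b-1 + m a^(r-1) after m steps, and (b+t)c - 1 is never in A(a-1).
   3. Part (b).  N = A/Ax is identified with K[a] through phi P = sum_i E^i(p_i),
      E = 1 - d: the kernel of phi is Ax, b acts on K[a] by E and K[a] by multiplication.
      Submodules of N are thus the d-stable ideals of K[a]; a generator g of such an ideal
      divides d(g), which forces g = c a^m.  So the nonzero submodules are the a^m N.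
   4. Part (c).  An isomorphism a^m N -> a^n N sends the class of a^m to that of u a^n,
      where bijectivity forces u to be a nonzero constant; compatibility with b then
      compares d(a^m) = m a^(m+r-1) with d(a^n) = n a^(n+r-1), giving m = n. *)


section \<open>The derivation d = a^r d/da\<close>

lemma dA_add: "dA r (x + y) = dA r x + dA r y"
  by (simp add: dA_def pderiv_add distrib_left)

lemma dA_minus: "dA r (- x) = - dA r x"
  by (simp add: dA_def pderiv_minus)

lemma dA_mult: "dA r (x * y) = dA r x * y + x * dA r y"
  by (simp add: dA_def pderiv_mult algebra_simps)

lemma dA_0 [simp]: "dA r 0 = 0"
  by (simp add: dA_def)

lemma dA_sum: "dA r (\<Sum>i\<in>A. g i) = (\<Sum>i\<in>A. dA r (g i))"
  by (induction A rule: infinite_finite_induct) (simp_all add: dA_add)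

lemma dA_pow_0 [simp]: "(dA r ^^ k) 0 = 0"
  by (induction k) simp_all

lemma dA_pow_add: "(dA r ^^ k) (x + y) = (dA r ^^ k) x + (dA r ^^ k) y"
  by (induction k) (auto simp: dA_add)

lemma dA_pow_minus: "(dA r ^^ k) (- x) = - (dA r ^^ k) x"
  by (induction k) (auto simp: dA_minus)

lemma dA_pow_dA_pow: "(dA r ^^ i) ((dA r ^^ j) x) = (dA r ^^ (i + j)) x"
  by (simp add: funpow_add)

lemma dA_pow_sum: "(dA r ^^ k) (\<Sum>i\<in>A. g i) = (\<Sum>i\<in>A. (dA r ^^ k) (g i))"
  by (induction k) (simp_all add: dA_sum)

text \<open>General Leibniz rule for the iterates of a derivation of a commutative ring; it is
  what makes the right action of A on K[a] compatible with the multiplication of A.\<close>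

lemma derivation_iterate_leibniz:
  fixes D :: "'a::comm_ring_1 \<Rightarrow> 'a"
  assumes add: "\<And>u v. D (u + v) = D u + D v"
    and mult: "\<And>u v. D (u * v) = D u * v + u * D v"
  shows "(D ^^ j) (x * y) = (\<Sum>k\<le>j. of_nat (j choose k) * ((D ^^ (j - k)) x * (D ^^ k) y))"
proof (induction j)
  case 0
  then show ?case by simp
next
  case (Suc n)
  define F where "F k = (D ^^ k) x" for k
  define G where "G k = (D ^^ k) y" for k
  have D0: "D 0 = 0" using add[of 0 0] by simp
  have D_sum: "D (\<Sum>i\<in>A. h i) = (\<Sum>i\<in>A. D (h i))" for h and A :: "nat set"
    by (induction A rule: infinite_finite_induct) (simp_all add: D0 add)
  have D1: "D 1 = 0" using mult[of 1 1] by simp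
  have D_of_nat: "D (of_nat c) = 0" for c
    by (induction c) (simp_all add: D0 D1 add)
  have "(D ^^ Suc n) (x * y) = D (\<Sum>k\<le>n. of_nat (n choose k) * (F (n - k) * G k))"
    using Suc.IH by (simp add: F_def G_def)
  also have "\<dots> = (\<Sum>k\<le>n. of_nat (n choose k) * (F (Suc n - k) * G k))
       + (\<Sum>k\<le>n. of_nat (n choose k) * (F (n - k) * G (Suc k)))"
    by (simp add: D_sum D_of_nat mult distrib_left sum.distrib F_def G_def Suc_diff_le)
  also have "(\<Sum>k\<le>n. of_nat (n choose k) * (F (n - k) * G (Suc k)))
      = (\<Sum>k=1..Suc n. of_nat (n choose (k - 1)) * (F (Suc n - k) * G k))"
    by (simp add: atMost_atLeast0 sum.shift_bounds_cl_Suc_ivl del: sum.cl_ivl_Suc)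
  also have "\<dots> = of_nat (n choose n) * (F 0 * G (Suc n))
      + (\<Sum>k=1..n. of_nat (n choose (k - 1)) * (F (Suc n - k) * G k))"
    by (subst sum.cl_ivl_Suc) (simp add: add.commute)
  also have "(\<Sum>k\<le>n. of_nat (n choose k) * (F (Suc n - k) * G k))
      = of_nat (n choose 0) * (F (Suc n) * G 0)
        + (\<Sum>k=1..n. of_nat (n choose k) * (F (Suc n - k) * G k))"
    by (simp add: atMost_atLeast0 sum.atLeast_Suc_atMost)
  finally have "(D ^^ Suc n) (x * y) = of_nat (Suc n choose 0) * (F (Suc n - 0) * G 0)
     + of_nat (Suc n choose Suc n) * (F (Suc n - Suc n) * G (Suc n))
     + (\<Sum>k=1..n. of_nat (Suc n choose k) * (F (Suc n - k) * G k))"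
    by (simp add: sum.distrib[symmetric] distrib_right[symmetric] choose_reduce_nat
        algebra_simps)
  also have "\<dots> = (\<Sum>k\<le>Suc n. of_nat (Suc n choose k) * (F (Suc n - k) * G k))"
  proof -
    have "{..Suc n} = {0} \<union> {Suc n} \<union> {1..n}" by auto
    then show ?thesis by (simp add: algebra_simps)
  qed
  finally show ?case by (simp add: F_def G_def)
qed

lemma dA_pow_leibniz:
  "(dA r ^^ j) (g * p) =
     (\<Sum>k\<le>j. smult (of_nat (j choose k)) ((dA r ^^ (j - k)) g * (dA r ^^ k) p))"
  using derivation_iterate_leibniz[of "dA r", OF dA_add dA_mult]
  by (simp add: of_nat_mult_conv_smult)

text \<open>d(a^m w) = a^m (m a^(r-1) w + a^r w'): d never lowers the a-adic valuation, and
  it multiplies a^m by m a^(r-1).\<close>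

lemma dA_apow_mult:
  fixes w :: "'k::field_char_0 poly"
  assumes "r \<ge> 1"
  shows "dA r ([:0,1:] ^ m * w) =
    [:0,1:] ^ m * (smult (of_nat m) ([:0,1:] ^ (r - 1)) * w + [:0,1:] ^ r * pderiv w)"
proof -
  obtain r' where r: "r = Suc r'" using assms by (cases r) auto
  have "[:0,1:] ^ r * pderiv ([:0,1:] ^ m :: 'k poly)
      = [:0,1:] ^ m * smult (of_nat m) ([:0,1:] ^ (r - 1))"
  proof (cases m)
    case 0
    then show ?thesis by simp
  next
    case (Suc m')
    have e: "[:0,1:] ^ r * [:0,1:] ^ m' = ([:0,1:] ^ Suc m' * [:0,1:] ^ (r - 1) :: 'k poly)"
      by (metis power_add add_Suc add.commute r diff_Suc_1)
    have "pderiv [:0,1:] = (1 :: 'k poly)" by (simp add: pderiv_pCons)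
    then have "[:0,1:] ^ r * pderiv ([:0,1:] ^ m :: 'k poly)
        = smult (of_nat m) ([:0,1:] ^ r * [:0,1:] ^ m')"
      by (simp only: Suc pderiv_power_Suc mult_1_right mult_smult_right)
    then show ?thesis by (simp only: e Suc mult_smult_right)
  qed
  then show ?thesis
    by (simp add: dA_def pderiv_mult algebra_simps)
qed


section \<open>The right action of A on K[a] and the ring laws of A\<close>

text \<open>K[a] is a right A-module with b acting as d and p \<in> K[a] by multiplication:
  f . (sum_i b^i p_i) = sum_i d^i(f) p_i.\<close>

definition ract :: "nat \<Rightarrow> 'k::field_char_0 poly \<Rightarrow> 'k poly poly \<Rightarrow> 'k poly" where
  "ract r f P = (\<Sum>i\<le>degree P. (dA r ^^ i) f * coeff P i)"

lemma ract_bound: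
  assumes "degree P \<le> N"
  shows "ract r f P = (\<Sum>i\<le>N. (dA r ^^ i) f * coeff P i)"
  unfolding ract_def
  by (rule sum.mono_neutral_left) (use assms in \<open>auto simp: coeff_eq_0\<close>)

lemma ract_add: "ract r f (P + Q) = ract r f P + ract r f Q"
proof -
  let ?N = "max (degree P) (degree Q)"
  have "degree (P + Q) \<le> ?N" by (rule degree_add_le) auto
  then show ?thesis
    by (simp add: ract_bound[of _ ?N] ract_bound[of P ?N] ract_bound[of Q ?N]
        distrib_left sum.distrib)
qed

lemma ract_minus: "ract r f (- P) = - ract r f P"
  by (simp add: ract_def sum_negf)

lemma ract_diff: "ract r f (P - Q) = ract r f P - ract r f Q"
  using ract_add[of r f P "- Q"] by (simp add: ract_minus)

lemma ract_0 [simp]: "ract r f 0 = 0"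
  by (simp add: ract_def)

lemma ract_fzero [simp]: "ract r 0 P = 0"
  by (simp add: ract_def)

lemma ract_sum: "ract r f (\<Sum>i\<in>A. P i) = (\<Sum>i\<in>A. ract r f (P i))"
  by (induction A rule: infinite_finite_induct) (simp_all add: ract_add)

lemma ract_fadd: "ract r (f + g) P = ract r f P + ract r g P"
  by (simp add: ract_def dA_pow_add distrib_right sum.distrib)

lemma ract_fminus: "ract r (- f) P = - ract r f P"
  by (simp add: ract_def dA_pow_minus sum_negf)

lemma ract_monom: "ract r f (monom c m) = (dA r ^^ m) f * c"
proof -
  have "ract r f (monom c m) = (\<Sum>i\<le>m. (dA r ^^ i) f * coeff (monom c m) i)"
    by (rule ract_bound) (simp add: degree_monom_le)
  also have "\<dots> = (\<Sum>i\<le>m. if i = m then (dA r ^^ i) f * c else 0)"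
    by (rule sum.cong) auto
  finally show ?thesis by simp
qed

lemma ract_const: "ract r f [:p:] = f * p"
  by (simp add: ract_def)

lemma ract_one: "ract r f 1 = f"
  by (simp add: ract_def)

lemma ract_ga: "ract r f ga = f * [:0, 1:]"
  by (simp add: ract_def ga_def)

lemma ract_gb: "ract r f gb = dA r f"
  by (simp add: ract_def gb_def)

lemma ract_pCons0: "ract r f (pCons 0 Q) = ract r (dA r f) Q"
proof -
  have "ract r f (pCons 0 Q) = (\<Sum>i\<le>Suc (degree Q). (dA r ^^ i) f * coeff (pCons 0 Q) i)"
    by (rule ract_bound) (simp add: degree_pCons_le)
  also have "\<dots> = (\<Sum>i\<le>degree Q. (dA r ^^ Suc i) f * coeff Q i)"
    by (subst sum.atMost_Suc_shift) simp
  also have "\<dots> = ract r (dA r f) Q"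
    by (simp add: ract_def funpow_swap1)
  finally show ?thesis .
qed

text \<open>The action is compatible with omult: this is the Leibniz rule in disguise.\<close>

lemma ract_omult: "ract r f (omult r P Q) = ract r (ract r f P) Q"
proof -
  let ?C = "\<lambda>j k. of_nat (j choose k) :: 'a"
  have "ract r f (omult r P Q) = (\<Sum>i\<le>degree P. \<Sum>j\<le>degree Q. \<Sum>k\<le>j.
      (dA r ^^ (i + j - k)) f * smult (?C j k) ((dA r ^^ k) (coeff P i) * coeff Q j))"
    by (simp add: omult_def ract_sum ract_monom)
  also have "\<dots> = (\<Sum>i\<le>degree P. \<Sum>j\<le>degree Q. \<Sum>k\<le>j.
      smult (?C j k) ((dA r ^^ (j - k)) ((dA r ^^ i) f) * (dA r ^^ k) (coeff P i)) * coeff Q j)"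
    by (intro sum.cong refl) (simp add: dA_pow_dA_pow algebra_simps)
  also have "\<dots> = (\<Sum>j\<le>degree Q. \<Sum>i\<le>degree P. \<Sum>k\<le>j.
      smult (?C j k) ((dA r ^^ (j - k)) ((dA r ^^ i) f) * (dA r ^^ k) (coeff P i)) * coeff Q j)"
    by (rule sum.swap)
  also have "\<dots> = (\<Sum>j\<le>degree Q.
      (dA r ^^ j) (\<Sum>i\<le>degree P. (dA r ^^ i) f * coeff P i) * coeff Q j)"
    by (simp add: dA_pow_sum dA_pow_leibniz sum_distrib_right)
  also have "\<dots> = ract r (ract r f P) Q" by (simp add: ract_def)
  finally show ?thesis .
qed

lemma coeff_omult_const_right: "coeff (omult r P [:q:]) m = coeff P m * q"
proof -
  have "omult r P [:q:] = (\<Sum>i\<le>degree P. monom (coeff P i * q) i)"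
    by (simp add: omult_def)
  also have "coeff \<dots> m = (\<Sum>i\<le>degree P. if i = m then coeff P i * q else 0)"
    by (simp add: coeff_sum)
  also have "\<dots> = coeff P m * q"
    by (auto simp: coeff_eq_0)
  finally show ?thesis .
qed

lemma omult_const_right: "omult r P [:q:] = map_poly (\<lambda>p. p * q) P"
  by (rule poly_eqI) (simp add: coeff_omult_const_right coeff_map_poly)

lemma coeff_omult_const_left:
  "coeff (omult r [:p:] Q) m = (\<Sum>j\<in>{m..degree Q}.
      smult (of_nat (j choose (j - m))) ((dA r ^^ (j - m)) p * coeff Q j))"
proof -
  have inner: "(\<Sum>k\<le>j. if j - k = m then smult (of_nat (j choose k)) ((dA r ^^ k) p * coeff Q j)
        else 0)
      = (if m \<le> j then smult (of_nat (j choose (j - m))) ((dA r ^^ (j - m)) p * coeff Q j)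
        else 0)" for j
  proof -
    have "(\<Sum>k\<le>j. if j - k = m then smult (of_nat (j choose k)) ((dA r ^^ k) p * coeff Q j)
          else 0)
        = (\<Sum>k\<le>j. if k = j - m \<and> m \<le> j
          then smult (of_nat (j choose k)) ((dA r ^^ k) p * coeff Q j) else 0)"
      by (rule sum.cong) auto
    then show ?thesis by (cases "m \<le> j") auto
  qed
  have "coeff (omult r [:p:] Q) m = (\<Sum>j\<le>degree Q. \<Sum>k\<le>j.
      if j - k = m then smult (of_nat (j choose k)) ((dA r ^^ k) p * coeff Q j) else 0)"
    by (simp add: omult_def coeff_sum)
  also have "\<dots> = (\<Sum>j\<le>degree Q. if m \<le> j then
      smult (of_nat (j choose (j - m))) ((dA r ^^ (j - m)) p * coeff Q j) else 0)"
    by (simp only: inner)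
  also have "\<dots> = (\<Sum>j\<in>{m..degree Q}.
      smult (of_nat (j choose (j - m))) ((dA r ^^ (j - m)) p * coeff Q j))"
    by (subst sum.inter_filter[symmetric]) (auto intro: sum.cong)
  finally show ?thesis .
qed

lemma coeff_omult_const_left_top:
  assumes "degree Q \<le> m"
  shows "coeff (omult r [:p:] Q) m = p * coeff Q m"
proof (cases "degree Q = m")
  case True
  then show ?thesis by (simp add: coeff_omult_const_left)
next
  case False
  then have "{m..degree Q} = {}" using assms by auto
  then show ?thesis using False assms by (simp add: coeff_omult_const_left coeff_eq_0)
qed

lemma coeff_omult_const_left_sub:
  assumes "degree Q = Suc n"
  shows "coeff (omult r [:p:] Q) n =
    p * coeff Q n + smult (of_nat (Suc n)) (dA r p * coeff Q (Suc n))"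
proof -
  have "{n..degree Q} = {n, Suc n}" using assms by auto
  then show ?thesis by (simp add: coeff_omult_const_left)
qed

text \<open>Faithfulness: if P acts as 0, then so does the commutator P a - a P, whose b-degree is
  smaller and whose next-to-top coefficient is -(n+1) a^r p_(n+1), nonzero in char 0.\<close>

lemma ract_faithful_degree:
  fixes P :: "'k::field_char_0 poly poly"
  shows "degree P = n \<Longrightarrow> (\<forall>f. ract r f P = 0) \<Longrightarrow> P = 0"
proof (induction n arbitrary: P rule: less_induct)
  case (less n)
  show ?case
  proof (cases n)
    case 0
    then obtain c where c: "P = [:c:]" using less.prems(1) by (metis degree_eq_zeroE)
    have "ract r 1 P = c" by (simp add: c ract_const)
    then show ?thesis using less.prems(2) c by simp
  next
    case (Suc m)
    define Q where "Q = omult r P ga - omult r ga P"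
    have kill: "\<forall>f. ract r f Q = 0"
      using less.prems(2) by (simp add: Q_def ract_diff ract_omult ract_ga)
    have top: "coeff Q k = 0" if "k \<ge> n" for k
      using that less.prems(1)
      by (simp add: Q_def ga_def coeff_omult_const_right coeff_omult_const_left_top
          mult.commute)
    have "degree Q \<le> m"
      by (rule degree_le) (use top Suc in auto)
    then have dQ: "degree Q < n" using Suc by simp
    have "coeff Q m = - smult (of_nat (Suc m)) ([:0,1:] ^ r * coeff P n)"
      using less.prems(1) Suc
      by (simp add: Q_def ga_def coeff_omult_const_right coeff_omult_const_left_sub
          mult.commute dA_def pderiv_pCons)
    moreover have "coeff P n \<noteq> 0"
      using less.prems(1) Suc by (metis leading_coeff_0_iff degree_0 nat.simps(3))
    ultimately have "Q \<noteq> 0" using of_nat_neq_0[of m, where 'a='k] by auto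
    moreover have "Q = 0" using less.IH[OF dQ refl kill] .
    ultimately show ?thesis by simp
  qed
qed

lemma omult_ext: "(\<And>f. ract r f P = ract r f Q) \<Longrightarrow> P = Q"
  using ract_faithful_degree[of "P - Q" _ r] by (simp add: ract_diff)

lemma omult_assoc: "omult r (omult r P Q) R = omult r P (omult r Q R)"
  by (rule omult_ext[of r]) (simp add: ract_omult)

lemma omult_add_left: "omult r (P + Q) R = omult r P R + omult r Q R"
  by (rule omult_ext[of r]) (simp add: ract_omult ract_add ract_fadd)

lemma omult_diff_right: "omult r P (Q - R) = omult r P Q - omult r P R"
  by (rule omult_ext[of r]) (simp add: ract_omult ract_diff)

lemma omult_minus_left: "omult r (- P) R = - omult r P R"
  by (rule omult_ext[of r]) (simp add: ract_omult ract_minus ract_fminus)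

lemma omult_one_right [simp]: "omult r P 1 = P"
  by (rule omult_ext[of r]) (simp add: ract_omult ract_one)

lemma omult_0_left [simp]: "omult r 0 P = 0"
  by (rule omult_ext[of r]) (simp add: ract_omult)

lemma omult_sum_left: "omult r (\<Sum>i\<in>A. P i) R = (\<Sum>i\<in>A. omult r (P i) R)"
  by (induction A rule: infinite_finite_induct) (simp_all add: omult_add_left)

lemma omult_const_const: "omult r [:p:] [:q:] = [:p * q:]"
  by (rule omult_ext[of r]) (simp add: ract_omult ract_const mult.assoc)

lemma omult_gb_left: "omult r gb Q = pCons 0 Q"
  by (rule omult_ext[of r]) (simp add: ract_omult ract_gb ract_pCons0)

lemma omult_gb_right: "omult r c gb = pCons 0 c + map_poly (dA r) c"
proof (rule omult_ext[of r])
  fix f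
  have "ract r f (omult r c gb) = dA r (\<Sum>i\<le>degree c. (dA r ^^ i) f * coeff c i)"
    by (simp add: ract_omult ract_gb) (simp add: ract_def)
  also have "\<dots> = (\<Sum>i\<le>degree c. (dA r ^^ Suc i) f * coeff c i)
      + (\<Sum>i\<le>degree c. (dA r ^^ i) f * dA r (coeff c i))"
    by (simp add: dA_sum dA_mult sum.distrib)
  also have "\<dots> = ract r f (pCons 0 c + map_poly (dA r) c)"
    by (simp add: ract_add ract_pCons0 ract_bound[of "map_poly _ c" "degree c"]
        map_poly_degree_leq coeff_map_poly) (simp add: ract_def funpow_swap1)
  finally show "ract r f (omult r c gb) = ract r f (pCons 0 c + map_poly (dA r) c)" .
qed

lemma left_ideal_lprinc: "left_ideal r (lprinc r y)"
  unfolding left_ideal_def lprinc_def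
proof (intro conjI ballI allI)
  show "0 \<in> {omult r c y |c. True}"
    by (rule CollectI, rule exI[of _ 0]) simp
next
  fix u v assume "u \<in> {omult r c y |c. True}" "v \<in> {omult r c y |c. True}"
  then show "u + v \<in> {omult r c y |c. True}" by (auto simp: omult_add_left[symmetric])
next
  fix u assume "u \<in> {omult r c y |c. True}"
  then show "- u \<in> {omult r c y |c. True}" by (auto simp: omult_minus_left[symmetric])
next
  fix e u assume "u \<in> {omult r c y |c. True}"
  then show "omult r e u \<in> {omult r c y |c. True}" by (auto simp: omult_assoc[symmetric])
qed

lemma left_ideal_diff: "left_ideal r I \<Longrightarrow> u \<in> I \<Longrightarrow> v \<in> I \<Longrightarrow> u - v \<in> I"
  unfolding left_ideal_def by (metis diff_conv_add_uminus)


section \<open>Part (a): the maximal left ideal J = A(a - 1)\<close>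

definition ev1 :: "'k::field_char_0 poly poly \<Rightarrow> 'k poly" where
  "ev1 P = map_poly (\<lambda>p. poly p 1) P"

definition lift :: "'k::field_char_0 poly \<Rightarrow> 'k poly poly" where
  "lift g = map_poly (\<lambda>c. [:c:]) g"

lemma coeff_ev1: "coeff (ev1 P) i = poly (coeff P i) 1"
  by (simp add: ev1_def coeff_map_poly)

lemma coeff_lift: "coeff (lift g) i = [:coeff g i:]"
  by (simp add: lift_def coeff_map_poly)

lemma ev1_diff: "ev1 (P - Q) = ev1 P - ev1 Q"
  by (rule poly_eqI) (simp add: coeff_ev1)

lemma ev1_add: "ev1 (P + Q) = ev1 P + ev1 Q"
  by (rule poly_eqI) (simp add: coeff_ev1)

lemma ev1_lift [simp]: "ev1 (lift g) = g"
  by (rule poly_eqI) (simp add: coeff_ev1 coeff_lift)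

lemma ev1_one [simp]: "ev1 1 = 1"
  by (simp add: ev1_def)

lemma ev1_pCons0: "ev1 (pCons 0 P) = pCons 0 (ev1 P)"
  by (rule poly_eqI) (simp add: coeff_ev1 coeff_pCons split: nat.split)

lemma degree_lift [simp]: "degree (lift g) = degree g"
  unfolding lift_def by (rule degree_map_poly) simp

lemma ga_minus_1: "ga - 1 = [:[:-1, 1:]:]"
  by (simp add: ga_def one_pCons)

text \<open>Right multiplication by a - 1 multiplies every coefficient by a - 1, so A(a-1) is exactly
  the set of elements whose coefficients all vanish at a = 1.\<close>

lemma J_iff_ev1: "P \<in> lprinc r (ga - 1) \<longleftrightarrow> ev1 P = 0"
proof
  assume "P \<in> lprinc r (ga - 1)"
  then obtain c where c: "P = omult r c [:[:-1, 1:]:]" by (auto simp: lprinc_def ga_minus_1)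
  show "ev1 P = 0"
    by (rule poly_eqI) (simp add: c coeff_ev1 omult_const_right coeff_map_poly)
next
  assume h: "ev1 P = 0"
  define c where "c = map_poly (\<lambda>p. p div [:-1, 1:]) P"
  have dv: "[:-1, 1:] dvd coeff P i" for i
    using arg_cong[OF h, of "\<lambda>X. coeff X i"] by (simp add: coeff_ev1 poly_eq_0_iff_dvd)
  have "omult r c [:[:-1, 1:]:] = P"
    by (rule poly_eqI)
      (simp only: c_def omult_const_right coeff_map_poly div_0 mult_zero_left
        dvd_div_mult_self[OF dv])
  then show "P \<in> lprinc r (ga - 1)" by (auto simp: lprinc_def ga_minus_1)
qed

lemma minus_lift_ev1_in_J: "P - lift (ev1 P) \<in> lprinc r (ga - 1)"
  by (simp add: J_iff_ev1 ev1_diff)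

text \<open>Modulo J, (a - 1) g(b) is a polynomial in b of degree one less: its top coefficient is
  (n+1) d(a) g_(n+1) evaluated at 1, i.e. (n+1) g_(n+1).\<close>

lemma degree_ev1_a_minus_1_times:
  fixes g :: "'k::field_char_0 poly" and r :: nat
  assumes "degree g = Suc n"
  defines "h \<equiv> ev1 (omult r [:[:-1, 1:]:] (lift g))"
  shows "degree h = n \<and> h \<noteq> 0"
proof -
  have top: "coeff h k = 0" if "k > n" for k
  proof -
    have "degree (lift g) \<le> k" using that assms by simp
    then show ?thesis
      by (simp add: h_def coeff_ev1 coeff_omult_const_left_top coeff_lift)
  qed
  have "coeff h n = of_nat (Suc n) * coeff g (Suc n)"
    using assms
    by (simp add: h_def coeff_ev1 coeff_omult_const_left_sub coeff_lift dA_def pderiv_pCons)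
  moreover have "coeff g (Suc n) \<noteq> 0"
    using assms by (metis leading_coeff_0_iff degree_0 nat.simps(3))
  ultimately have hn: "coeff h n \<noteq> 0" using of_nat_neq_0[of n, where 'a='k] by simp
  have "degree h \<le> n" by (rule degree_le) (use top in auto)
  moreover have "n \<le> degree h" using hn le_degree by blast
  ultimately show ?thesis using hn by auto
qed

lemma one_in_left_ideal_above_J:
  fixes g :: "'k::field_char_0 poly"
  assumes LI: "left_ideal r I" and JI: "lprinc r (ga - 1) \<subseteq> I"
  shows "degree g = n \<Longrightarrow> g \<noteq> 0 \<Longrightarrow> lift g \<in> I \<Longrightarrow> 1 \<in> I"
proof (induction n arbitrary: g)
  case 0
  then obtain c where "g = [:c:]" by (metis degree_eq_zeroE)
  with 0 have c: "g = [:c:]" "c \<noteq> 0" by simp_all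
  have lg: "lift g = [:[:c:]:]"
    by (rule poly_eqI) (simp add: c coeff_lift coeff_pCons split: nat.split)
  then have "omult r [:[:inverse c:]:] (lift g) \<in> I" using LI 0 unfolding left_ideal_def by blast
  moreover have "omult r [:[:inverse c:]:] (lift g) = 1"
    using c lg by (simp add: omult_const_const one_pCons)
  ultimately show ?case by simp
next
  case (Suc n)
  define X where "X = omult r [:[:-1, 1:]:] (lift g)"
  have XI: "X \<in> I" using LI Suc.prems unfolding left_ideal_def X_def by blast
  have "X - lift (ev1 X) \<in> I" using JI minus_lift_ev1_in_J by blast
  then have "lift (ev1 X) \<in> I" using left_ideal_diff[OF LI XI] by fastforce
  then show ?case
    using Suc.IH degree_ev1_a_minus_1_times[OF Suc.prems(1), of r] unfolding X_def by blast
qed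

theorem J_maximal: "maximal_left_ideal r (lprinc r (ga - 1))"
  unfolding maximal_left_ideal_def
proof (intro conjI allI impI)
  show "left_ideal r (lprinc r (ga - 1))" by (rule left_ideal_lprinc)
  show "lprinc r (ga - 1) \<noteq> UNIV" using J_iff_ev1[of 1 r] by (auto simp: ev1_def)
next
  fix I :: "'a poly poly set" assume h: "left_ideal r I \<and> lprinc r (ga - 1) \<subseteq> I"
  show "I = lprinc r (ga - 1) \<or> I = UNIV"
  proof (cases "I = lprinc r (ga - 1)")
    case False
    then obtain P where P: "P \<in> I" "ev1 P \<noteq> 0" using h J_iff_ev1 by blast
    have "P - lift (ev1 P) \<in> I" using h minus_lift_ev1_in_J by blast
    then have "lift (ev1 P) \<in> I" using left_ideal_diff[of r I P] h P by fastforce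
    then have "1 \<in> I" using one_in_left_ideal_above_J[of r I "ev1 P"] h P by blast
    then have "omult r c 1 \<in> I" for c using h unfolding left_ideal_def by blast
    then have "I = UNIV" by auto
    then show ?thesis by simp
  qed simp
qed

text \<open>The iterates of sigma on x = b - 1:  sigma^m(x) = b - 1 + m a^(r-1), because
  a (b - 1 + m a^(r-1)) = (b - 1 + (m+1) a^(r-1)) a.\<close>

definition sigma_x :: "nat \<Rightarrow> nat \<Rightarrow> 'k::field_char_0 poly poly" where
  "sigma_x r m = gb + [:smult (of_nat m) ([:0,1:] ^ (r - 1)) - 1:]"

lemma omult_right_cancel_ga: "omult r z ga = omult r z' ga \<Longrightarrow> z = z'"
proof (rule omult_ext[of r])
  fix f assume "omult r z ga = omult r z' ga"
  then have "ract r f (omult r z ga) = ract r f (omult r z' ga)" by simp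
  then show "ract r f z = ract r f z'" by (simp add: ract_omult ract_ga)
qed

lemma ga_sigma_x: "r \<ge> 1 \<Longrightarrow> omult r ga (sigma_x r m) = omult r (sigma_x r (Suc m)) ga"
proof (rule omult_ext[of r])
  fix f :: "'a poly"
  assume "r \<ge> 1"
  then obtain r' where r: "r = Suc r'" by (cases r) auto
  show "ract r f (omult r ga (sigma_x r m)) = ract r f (omult r (sigma_x r (Suc m)) ga)"
    by (simp add: ract_omult ract_ga sigma_x_def ract_add ract_gb ract_const
        dA_mult r dA_def pderiv_pCons algebra_simps smult_add_left)
qed

lemma sigma_iterate_x: "r \<ge> 1 \<Longrightarrow> (sigma r ^^ m) (gb - 1) = sigma_x r m"
proof (induction m)
  case 0
  then show ?case by (simp add: sigma_x_def one_pCons)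
next
  case (Suc m)
  have step: "omult r ga (sigma_x r m) = omult r (sigma_x r (Suc m)) ga"
    by (rule ga_sigma_x[OF Suc.prems])
  have "sigma r (sigma_x r m) = sigma_x r (Suc m)"
    unfolding sigma_def
  proof (rule the_equality)
    fix z assume "omult r ga (sigma_x r m) = omult r z ga"
    then show "z = sigma_x r (Suc m)" using step by (metis omult_right_cancel_ga)
  qed (rule step)
  then show ?case using Suc by simp
qed

lemma coeff_ev1_const_omult:
  assumes "\<And>j. j \<ge> k \<Longrightarrow> coeff (ev1 c) j = 0"
  shows "coeff (ev1 (omult r [:t:] c)) k = 0"
proof -
  have "coeff (ev1 (omult r [:t:] c)) k = (\<Sum>j\<in>{k..degree c}.
      of_nat (j choose (j - k)) * (poly ((dA r ^^ (j - k)) t) 1 * poly (coeff c j) 1))"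
    by (simp add: coeff_ev1 coeff_omult_const_left poly_sum)
  also have "\<dots> = 0"
    using assms by (intro sum.neutral) (auto simp: coeff_ev1)
  finally show ?thesis .
qed

text \<open>(b + t) c - 1 is never in J: modulo J the b-degree of (b + t) c is one more than that
  of c, so (b + t) c is never congruent to the constant 1.\<close>

lemma b_plus_const_not_invertible_mod_J: "omult r (gb + [:t:]) c - 1 \<notin> lprinc r (ga - 1)"
proof
  assume "omult r (gb + [:t:]) c - 1 \<in> lprinc r (ga - 1)"
  then have z: "ev1 (omult r (gb + [:t:]) c - 1) = 0" by (simp add: J_iff_ev1)
  have e: "ev1 (omult r (gb + [:t:]) c - 1) = pCons 0 (ev1 c) + ev1 (omult r [:t:] c) - 1"
    by (simp add: omult_add_left omult_gb_left ev1_diff ev1_add ev1_pCons0)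
  show False
  proof (cases "ev1 c = 0")
    case True
    have "ev1 (omult r [:t:] c) = 0"
      by (rule poly_eqI) (simp add: coeff_ev1_const_omult True)
    then show False using z e True by simp
  next
    case False
    let ?d = "degree (ev1 c)"
    have "coeff (ev1 (omult r [:t:] c)) (Suc ?d) = 0"
      by (rule coeff_ev1_const_omult) (simp add: coeff_eq_0)
    then have "coeff (ev1 (omult r (gb + [:t:]) c - 1)) (Suc ?d) = coeff (ev1 c) ?d"
      by (simp add: e)
    then show False using z False by simp
  qed
qed

corollary sigma_x_not_invertible_mod_J:
  "r \<ge> 1 \<Longrightarrow> omult r ((sigma r ^^ m) (gb - 1)) c - 1 \<notin> lprinc r (ga - 1)"
  by (simp add: sigma_iterate_x sigma_x_def b_plus_const_not_invertible_mod_J)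


section \<open>The module N = A/Ax, x = b - 1, as K[a]\<close>

text \<open>E = 1 - d describes the action of b on N: b p = p b - d(p) = p - d(p) modulo Ax.\<close>

definition E :: "nat \<Rightarrow> 'k::field_char_0 poly \<Rightarrow> 'k poly" where
  "E r g = g - dA r g"

lemma E_pow_0 [simp]: "(E r ^^ k) 0 = 0"
  by (induction k) (simp_all add: E_def dA_def)

lemma E_pow_add: "(E r ^^ k) (x + y) = (E r ^^ k) x + (E r ^^ k) y"
  by (induction k) (auto simp: E_def dA_add)

lemma E_pow_minus: "(E r ^^ k) (- x) = - (E r ^^ k) x"
  by (induction k) (auto simp: E_def dA_minus)

lemma E_pow_diff: "(E r ^^ k) (x - y) = (E r ^^ k) x - (E r ^^ k) y"
  using E_pow_add[where x=x and y="- y"] by (simp add: E_pow_minus)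

lemma E_sum: "E r (\<Sum>i\<in>A. g i) = (\<Sum>i\<in>A. E r (g i))"
  by (induction A rule: infinite_finite_induct) (simp_all add: E_def dA_add dA_sum)

text \<open>phi P is the image of P in N = K[a]: b^i p acts as E^i(p).\<close>

definition phi :: "nat \<Rightarrow> 'k::field_char_0 poly poly \<Rightarrow> 'k poly" where
  "phi r P = (\<Sum>i\<le>degree P. (E r ^^ i) (coeff P i))"

lemma phi_bound:
  assumes "degree P \<le> N"
  shows "phi r P = (\<Sum>i\<le>N. (E r ^^ i) (coeff P i))"
  unfolding phi_def
  by (rule sum.mono_neutral_left) (use assms in \<open>auto simp: coeff_eq_0\<close>)

lemma phi_add: "phi r (P + Q) = phi r P + phi r Q"
proof -
  let ?N = "max (degree P) (degree Q)"
  have "degree (P + Q) \<le> ?N" by (rule degree_add_le) auto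
  then show ?thesis
    by (simp add: phi_bound[of _ ?N] phi_bound[of P ?N] phi_bound[of Q ?N] E_pow_add
        sum.distrib)
qed

lemma phi_minus: "phi r (- P) = - phi r P"
  by (simp add: phi_def E_pow_minus sum_negf)

lemma phi_diff: "phi r (P - Q) = phi r P - phi r Q"
  using phi_add[of r P "- Q"] by (simp add: phi_minus)

lemma phi_0 [simp]: "phi r 0 = 0"
  by (simp add: phi_def)

lemma phi_const [simp]: "phi r [:g:] = g"
  by (simp add: phi_def)

lemma phi_pCons0: "phi r (pCons 0 c) = E r (phi r c)"
proof -
  have "phi r (pCons 0 c) = (\<Sum>i\<le>Suc (degree c). (E r ^^ i) (coeff (pCons 0 c) i))"
    by (rule phi_bound) (simp add: degree_pCons_le)
  also have "\<dots> = (\<Sum>i\<le>degree c. (E r ^^ Suc i) (coeff c i))"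
    by (subst sum.atMost_Suc_shift) simp
  also have "\<dots> = E r (phi r c)"
    by (simp add: phi_def E_sum)
  finally show ?thesis .
qed

text \<open>phi kills Ax:  c (b - 1) = b c + d(c) - c  maps to  E(phi c) + phi(d c) - phi c = 0.\<close>

lemma phi_left_multiple_x: "phi r (omult r c (gb - 1)) = 0"
proof -
  have "phi r (omult r c (gb - 1)) = E r (phi r c) + phi r (map_poly (dA r) c) - phi r c"
    by (simp add: omult_diff_right omult_gb_right phi_add phi_diff phi_pCons0)
  also have "\<dots> = (\<Sum>i\<le>degree c. (E r ^^ Suc i) (coeff c i)) +
     (\<Sum>i\<le>degree c. (E r ^^ i) (dA r (coeff c i))) - (\<Sum>i\<le>degree c. (E r ^^ i) (coeff c i))"
    by (simp add: phi_bound[of "map_poly _ c" "degree c"] map_poly_degree_leq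
        coeff_map_poly) (simp add: phi_def E_sum)
  also have "\<dots> = (\<Sum>i\<le>degree c. (E r ^^ i) (E r (coeff c i))
      + (E r ^^ i) (dA r (coeff c i)) - (E r ^^ i) (coeff c i))"
    by (simp add: sum.distrib sum_subtractf funpow_swap1)
  also have "\<dots> = 0"
    by (rule sum.neutral) (simp add: E_def E_pow_diff)
  finally show ?thesis .
qed

lemma omult_const_x: "omult r [:q:] (gb - 1) = monom q 1 - [:E r q:]"
  by (rule omult_ext[of r])
    (simp add: ract_omult ract_const ract_diff ract_gb ract_one ract_monom E_def dA_mult
      algebra_simps)

lemma monom_mod_Ax: "\<exists>W. monom p i - [:(E r ^^ i) p:] = omult r W (gb - 1)"
proof (induction i arbitrary: p)
  case 0
  show ?case by (rule exI[of _ 0]) (simp add: monom_0)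
next
  case (Suc i)
  obtain W where W: "monom p i - [:(E r ^^ i) p:] = omult r W (gb - 1)" using Suc by blast
  have "monom p (Suc i) - [:(E r ^^ Suc i) p:]
      = omult r gb (monom p i - [:(E r ^^ i) p:]) + (monom ((E r ^^ i) p) 1
        - [:E r ((E r ^^ i) p):])"
    by (simp add: omult_diff_right omult_gb_left monom_Suc monom_0)
  also have "\<dots> = omult r (omult r gb W + [:(E r ^^ i) p:]) (gb - 1)"
    by (simp add: W omult_const_x omult_add_left omult_assoc)
  finally show ?case by blast
qed

lemma minus_phi_in_Ax:
  fixes P :: "'k::field_char_0 poly poly"
  shows "\<exists>W. P - [:phi r P:] = omult r W (gb - 1)"
proof -
  define W :: "'k poly \<Rightarrow> nat \<Rightarrow> 'k poly poly" where "W p i = (SOME W. monom p i - [:(E r ^^ i) p:] = omult r W (gb - 1))"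
    for p i
  have W: "monom p i - [:(E r ^^ i) p:] = omult r (W p i) (gb - 1)" for p i
    unfolding W_def by (rule someI_ex) (rule monom_mod_Ax)
  have "[:phi r P:] = (\<Sum>i\<le>degree P. [:(E r ^^ i) (coeff P i):])"
    by (simp add: phi_def monom_0[symmetric] monom_sum)
  then have "P - [:phi r P:]
      = (\<Sum>i\<le>degree P. monom (coeff P i) i - [:(E r ^^ i) (coeff P i):])"
    by (simp add: sum_subtractf poly_as_sum_of_monoms)
  also have "\<dots> = omult r (\<Sum>i\<le>degree P. W (coeff P i) i) (gb - 1)"
    by (simp add: W omult_sum_left)
  finally show ?thesis by blast
qed

theorem Ax_iff_phi: "P \<in> lprinc r (gb - 1) \<longleftrightarrow> phi r P = 0"
  using minus_phi_in_Ax[of P r] by (auto simp: lprinc_def phi_left_multiple_x)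

definition ncoset :: "nat \<Rightarrow> 'k::field_char_0 poly \<Rightarrow> 'k poly poly set" where
  "ncoset r g = {P. phi r P = g}"

definition nact :: "nat \<Rightarrow> 'k::field_char_0 poly poly \<Rightarrow> 'k poly \<Rightarrow> 'k poly" where
  "nact r c g = phi r (omult r c [:g:])"

lemma qcoset_ncoset: "qcoset (lprinc r (gb - 1)) u = ncoset r (phi r u)"
  unfolding qcoset_def ncoset_def
proof (intro set_eqI iffI)
  fix P assume "P \<in> {u + y |y. y \<in> lprinc r (gb - 1)}"
  then show "P \<in> {P. phi r P = phi r u}" by (auto simp: Ax_iff_phi phi_add)
next
  fix P assume "P \<in> {P. phi r P = phi r u}"
  then have "P = u + (P - u)" "P - u \<in> lprinc r (gb - 1)" by (auto simp: Ax_iff_phi phi_diff)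
  then show "P \<in> {u + y |y. y \<in> lprinc r (gb - 1)}" by blast
qed

lemma qcarrier_ncoset: "qcarrier (lprinc r (gb - 1)) = range (ncoset r)"
  unfolding qcarrier_def by (auto simp: qcoset_ncoset) (metis phi_const rangeI)

lemma ncoset_inj: "inj (ncoset r)"
  by (rule injI) (metis (mono_tags) ncoset_def mem_Collect_eq phi_const)

lemma ncoset_eq_iff [simp]: "ncoset r g = ncoset r h \<longleftrightarrow> g = h"
  by (rule inj_eq[OF ncoset_inj])

lemma qadd_ncoset: "qadd (ncoset r g) (ncoset r h) = ncoset r (g + h)"
  unfolding qadd_def ncoset_def
proof (intro set_eqI iffI)
  fix P assume "P \<in> {u + v |u v. u \<in> {P. phi r P = g} \<and> v \<in> {P. phi r P = h}}"
  then show "P \<in> {P. phi r P = g + h}" by (auto simp: phi_add)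
next
  fix P assume "P \<in> {P. phi r P = g + h}"
  then have "P = (P - [:h:]) + [:h:]" "phi r (P - [:h:]) = g" by (auto simp: phi_diff)
  then show "P \<in> {u + v |u v. u \<in> {P. phi r P = g} \<and> v \<in> {P. phi r P = h}}"
    by (metis (mono_tags, lifting) mem_Collect_eq phi_const)
qed

lemma phi_omult: "phi r (omult r c u) = nact r c (phi r u)"
proof -
  obtain W where "u - [:phi r u:] = omult r W (gb - 1)" using minus_phi_in_Ax by blast
  then have "omult r c u - omult r c [:phi r u:] = omult r (omult r c W) (gb - 1)"
    by (simp add: omult_diff_right[symmetric] omult_assoc)
  then have "phi r (omult r c u - omult r c [:phi r u:]) = 0" by (simp add: phi_left_multiple_x)
  then show ?thesis by (simp add: nact_def phi_diff)
qed

lemma qsmult_ncoset: "qsmult r (lprinc r (gb - 1)) c (ncoset r g) = ncoset r (nact r c g)"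
  unfolding qsmult_def
proof (intro set_eqI iffI)
  fix P assume "P \<in> {omult r c u + y |u y. u \<in> ncoset r g \<and> y \<in> lprinc r (gb - 1)}"
  then show "P \<in> ncoset r (nact r c g)" by (auto simp: ncoset_def Ax_iff_phi phi_add phi_omult)
next
  fix P assume P: "P \<in> ncoset r (nact r c g)"
  have "P = omult r c [:g:] + (P - omult r c [:g:])" by simp
  moreover have "[:g:] \<in> ncoset r g" by (simp add: ncoset_def)
  moreover have "P - omult r c [:g:] \<in> lprinc r (gb - 1)"
    using P by (simp add: ncoset_def Ax_iff_phi phi_diff nact_def)
  ultimately show "P \<in> {omult r c u + y |u y. u \<in> ncoset r g \<and> y \<in> lprinc r (gb - 1)}"
    by blast
qed

lemma nact_const: "nact r [:p:] g = p * g"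
  by (simp add: nact_def omult_const_const)

lemma nact_gb: "nact r gb g = E r g"
  by (simp add: nact_def omult_gb_left phi_pCons0)

lemma nact_formula: "nact r c g = (\<Sum>i\<le>degree c. (E r ^^ i) (coeff c i * g))"
  unfolding nact_def omult_const_right
  by (subst phi_bound[of _ "degree c"]) (simp_all add: map_poly_degree_leq coeff_map_poly)


section \<open>Part (b): the submodules of N\<close>

text \<open>Submodules of N correspond to ideals of K[a] that are stable under d.\<close>

definition d_stable_ideal :: "nat \<Rightarrow> 'k::field_char_0 poly set \<Rightarrow> bool" where
  "d_stable_ideal r T \<longleftrightarrow> 0 \<in> T \<and> (\<forall>g\<in>T. \<forall>h\<in>T. g + h \<in> T) \<and> (\<forall>p. \<forall>g\<in>T. p * g \<in> T)
     \<and> (\<forall>g\<in>T. dA r g \<in> T)"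

definition apow_ideal :: "nat \<Rightarrow> 'k::field_char_0 poly set" where
  "apow_ideal m = range (\<lambda>h. [:0,1:] ^ m * h)"

lemma apow_in_apow_ideal: "[:0,1:] ^ m \<in> apow_ideal m"
  unfolding apow_ideal_def by (rule range_eqI[of _ _ 1]) simp

lemma d_stable_idealD:
  assumes "d_stable_ideal r T"
  shows "0 \<in> T" and "g \<in> T \<Longrightarrow> h \<in> T \<Longrightarrow> g + h \<in> T" and "g \<in> T \<Longrightarrow> p * g \<in> T"
    and "g \<in> T \<Longrightarrow> dA r g \<in> T"
  using assms unfolding d_stable_ideal_def by blast+

lemma d_stable_ideal_nact:
  assumes T: "d_stable_ideal r T" and g: "g \<in> T"
  shows "nact r c g \<in> T"
proof -
  have sum: "sum f A \<in> T" if "\<And>i. i \<in> A \<Longrightarrow> f i \<in> T" for f and A :: "nat set"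
    using that
    by (induction A rule: infinite_finite_induct) (simp_all add: d_stable_idealD[OF T])
  have E: "(E r ^^ i) h \<in> T" if "h \<in> T" for i h
  proof (induction i)
    case (Suc i)
    have "(E r ^^ Suc i) h = (E r ^^ i) h + (-1) * dA r ((E r ^^ i) h)" by (simp add: E_def)
    then show ?case
      using d_stable_idealD(2,3,4)[OF T] Suc by metis
  qed (simp add: that)
  show ?thesis
    unfolding nact_formula by (rule sum, rule E, rule d_stable_idealD(3)[OF T g])
qed

lemma d_stable_apow_ideal:
  assumes "r \<ge> 1"
  shows "d_stable_ideal r (apow_ideal m :: 'k::field_char_0 poly set)"
  unfolding d_stable_ideal_def apow_ideal_def
proof (intro conjI ballI allI)
  show "0 \<in> range (\<lambda>h. [:0,1:] ^ m * (h :: 'k poly))" by (rule range_eqI[of _ _ 0]) simp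
  fix g h :: "'k poly"
  assume "g \<in> range (\<lambda>h. [:0,1:] ^ m * h)" "h \<in> range (\<lambda>h. [:0,1:] ^ m * h)"
  then show "g + h \<in> range (\<lambda>h. [:0,1:] ^ m * h)" by (auto simp: distrib_left[symmetric])
next
  fix p g :: "'k poly" assume "g \<in> range (\<lambda>h. [:0,1:] ^ m * h)"
  then obtain h where "g = [:0,1:] ^ m * h" by blast
  then have "p * g = [:0,1:] ^ m * (p * h)" by (simp only: mult.left_commute)
  then show "p * g \<in> range (\<lambda>h. [:0,1:] ^ m * h)" by (rule range_eqI)
next
  fix g :: "'k poly" assume "g \<in> range (\<lambda>h. [:0,1:] ^ m * h)"
  then show "dA r g \<in> range (\<lambda>h. [:0,1:] ^ m * h)" by (auto simp: dA_apow_mult[OF assms])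
qed

lemma apow_ideal_strict_mono: "apow_ideal (Suc m) \<subset> (apow_ideal m :: 'k::field_char_0 poly set)"
proof
  show "apow_ideal (Suc m) \<subseteq> (apow_ideal m :: 'k poly set)"
  proof
    fix g :: "'k poly" assume "g \<in> apow_ideal (Suc m)"
    then obtain h where "g = [:0,1:] ^ Suc m * h" unfolding apow_ideal_def by blast
    then have "g = [:0,1:] ^ m * ([:0,1:] * h)" by (simp only: power_Suc2 mult.assoc)
    then show "g \<in> apow_ideal m" unfolding apow_ideal_def by (rule range_eqI)
  qed
  have "[:0,1:] ^ m \<notin> (apow_ideal (Suc m) :: 'k poly set)"
  proof
    assume "[:0,1:] ^ m \<in> (apow_ideal (Suc m) :: 'k poly set)"
    then obtain h :: "'k poly" where "[:0,1:] ^ m * 1 = [:0,1:] ^ m * ([:0,1:] * h)"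
      by (auto simp: apow_ideal_def mult.assoc)
    then have "1 = [:0,1:] * h" by (subst (asm) mult_left_cancel) simp_all
    then have "poly (1 :: 'k poly) 0 = poly ([:0,1:] * h) 0" by simp
    then show False by simp
  qed
  then show "apow_ideal (Suc m) \<noteq> (apow_ideal m :: 'k poly set)"
    using apow_in_apow_ideal by blast
qed

lemma ideal_min_degree_generator:
  fixes T :: "'k::field poly set"
  assumes add: "\<And>g h. g \<in> T \<Longrightarrow> h \<in> T \<Longrightarrow> g + h \<in> T"
    and mult: "\<And>p g. g \<in> T \<Longrightarrow> p * g \<in> T" and nz: "g0 \<in> T" "g0 \<noteq> 0"
  obtains g where "g \<in> T" "g \<noteq> 0" "\<And>h. h \<in> T \<Longrightarrow> g dvd h"
proof -
  define n where "n = (LEAST n. \<exists>g\<in>T. g \<noteq> 0 \<and> degree g = n)"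
  have "\<exists>g\<in>T. g \<noteq> 0 \<and> degree g = n"
    unfolding n_def by (rule LeastI_ex) (use nz in blast)
  then obtain g where g: "g \<in> T" "g \<noteq> 0" "degree g = n" by blast
  have minl: "degree h \<ge> n" if "h \<in> T" "h \<noteq> 0" for h
    unfolding n_def by (rule Least_le) (use that in blast)
  have "g dvd h" if h: "h \<in> T" for h
  proof (rule ccontr)
    assume "\<not> g dvd h"
    then have nz: "h mod g \<noteq> 0" by (simp add: mod_eq_0_iff_dvd)
    have "h mod g = h - (h div g) * g" by (simp add: minus_div_mult_eq_mod)
    also have "\<dots> = h + (- (h div g)) * g" by simp
    finally have "h mod g \<in> T" using add[OF h mult[OF g(1)]] by (simp only:)
    then have "n \<le> degree (h mod g)" using nz by (rule minl)
    moreover have "degree (h mod g) < n" using degree_mod_less[OF g(2), of h] nz g(3) by simp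
    ultimately show False by simp
  qed
  then show ?thesis using that g by blast
qed

lemma dvd_a_cancel:
  fixes w y :: "'k::field poly"
  assumes "\<not> [:0,1:] dvd w" "w dvd [:0,1:] * y"
  shows "w dvd y"
proof -
  obtain c0 w1 where w: "w = pCons c0 w1" by (cases w) auto
  have c0: "c0 \<noteq> 0"
  proof
    assume "c0 = 0"
    then have "w = [:0,1:] * w1" by (simp add: w)
    then show False using assms(1) by (metis dvd_triv_left)
  qed
  have "smult c0 y = w * y - w1 * ([:0,1:] * y)"
    by (simp add: w algebra_simps)
  moreover have "w dvd w * y - w1 * ([:0,1:] * y)"
    using dvd_mult[OF assms(2)] by (rule dvd_diff[OF dvd_triv_left])
  ultimately have "w dvd smult c0 y" by simp
  then show ?thesis using c0 by (simp add: dvd_smult_iff)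
qed

lemma dvd_apow_cancel:
  fixes w y :: "'k::field poly"
  assumes "\<not> [:0,1:] dvd w"
  shows "w dvd [:0,1:] ^ n * y \<Longrightarrow> w dvd y"
proof (induction n)
  case (Suc n)
  then show ?case using dvd_a_cancel[OF assms, of "[:0,1:] ^ n * y"] by (simp add: mult.assoc)
qed simp

text \<open>A nonzero polynomial dividing its image under d is c a^k: write g = a^k w with a not
  dividing w; then w divides a^r w', hence w', so w is constant (char 0).\<close>

lemma divides_dA_imp_apow:
  fixes g :: "'k::field_char_0 poly"
  assumes r: "r \<ge> 1" and "g \<noteq> 0" and gd: "g dvd dA r g"
  obtains c k where "c \<noteq> 0" "g = smult c ([:0,1:] ^ k)"
proof -
  obtain w where w: "g = [:0,1:] ^ order 0 g * w" "\<not> [:0,1:] dvd w"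
    using order_decomp[OF \<open>g \<noteq> 0\<close>, of 0] by auto
  define k where "k = order 0 g"
  have "[:0,1:] ^ k * w dvd
      [:0,1:] ^ k * (smult (of_nat k) ([:0,1:] ^ (r - 1)) * w + [:0,1:] ^ r * pderiv w)"
    using gd unfolding k_def[symmetric] w(1)[folded k_def] dA_apow_mult[OF r] .
  then have "w dvd smult (of_nat k) ([:0,1:] ^ (r - 1)) * w + [:0,1:] ^ r * pderiv w"
    by (subst (asm) dvd_times_left_cancel_iff) simp_all
  then have "w dvd [:0,1:] ^ r * pderiv w"
    by (simp only: dvd_add_right_iff[OF dvd_triv_right])
  then have "w dvd pderiv w" by (rule dvd_apow_cancel[OF w(2)])
  then have "pderiv w = 0"
    by (metis degree_pderiv dvd_imp_degree_le diff_less less_numeral_extra(1) not_le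
        pderiv_eq_0_iff not_gr0)
  then have "degree w = 0" by (simp add: pderiv_eq_0_iff)
  then obtain c where c: "w = [:c:]" by (metis degree_eq_zeroE)
  moreover have "c \<noteq> 0"
  proof
    assume "c = 0"
    then have "w = 0" using c by simp
    then show False using w(2) by simp
  qed
  ultimately show ?thesis using that[of c k] w(1) unfolding k_def by simp
qed

theorem d_stable_ideal_is_apow:
  fixes T :: "'k::field_char_0 poly set"
  assumes r: "r \<ge> 1" and T: "d_stable_ideal r T" and nz: "g0 \<in> T" "g0 \<noteq> 0"
  shows "\<exists>m. T = apow_ideal m"
proof -
  obtain g where g: "g \<in> T" "g \<noteq> 0" and dvdT: "\<And>h. h \<in> T \<Longrightarrow> g dvd h"
    using ideal_min_degree_generator[OF d_stable_idealD(2,3)[OF T] nz] by blast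
  have "g dvd dA r g" by (rule dvdT[OF d_stable_idealD(4)[OF T g(1)]])
  then obtain c k where c: "c \<noteq> 0" "g = smult c ([:0,1:] ^ k)"
    by (rule divides_dA_imp_apow[OF r g(2)])
  have "T = apow_ideal k"
  proof (intro set_eqI iffI)
    fix h assume "h \<in> T"
    then obtain q where "h = g * q" using dvdT by blast
    then have "h = [:0,1:] ^ k * smult c q" using c(2) by simp
    then show "h \<in> apow_ideal k" unfolding apow_ideal_def by (rule range_eqI)
  next
    fix h :: "'k poly" assume "h \<in> apow_ideal k"
    then obtain q where "h = [:0,1:] ^ k * q" by (auto simp: apow_ideal_def)
    then have "h = smult (inverse c) q * g" using c by (simp add: algebra_simps)
    then show "h \<in> T" using d_stable_idealD(3)[OF T g(1)] by (simp only:)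
  qed
  then show ?thesis ..
qed

lemma opow_ga: "opow r ga m = [:[:0,1:] ^ m:]"
  by (induction m) (simp_all add: opow_def one_pCons ga_def omult_const_const)

lemma a_power_submodule:
  "qsmult r (lprinc r (gb - 1)) (opow r ga m) ` qcarrier (lprinc r (gb - 1))
     = ncoset r ` apow_ideal m"
proof -
  have "qsmult r (lprinc r (gb - 1)) (opow r ga m) ` qcarrier (lprinc r (gb - 1))
      = (\<lambda>g. ncoset r ([:0,1:] ^ m * g)) ` UNIV"
    by (simp add: qcarrier_ncoset opow_ga image_image qsmult_ncoset nact_const)
  then show ?thesis by (simp add: apow_ideal_def image_image)
qed

lemma qsubmodule_apow:
  assumes "r \<ge> 1"
  shows "qsubmodule r (lprinc r (gb - 1)) (ncoset r ` (apow_ideal m :: 'k::field_char_0 poly set))"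
  using d_stable_apow_ideal[OF assms, of m] d_stable_ideal_nact[of r "apow_ideal m"]
  unfolding qsubmodule_def d_stable_ideal_def
  by (auto simp: qcarrier_ncoset qcoset_ncoset qadd_ncoset qsmult_ncoset)

lemma qsubmodule_is_apow:
  fixes S :: "'k::field_char_0 poly poly set set"
  assumes r: "r \<ge> 1" and S: "qsubmodule r (lprinc r (gb - 1)) S"
    and nz: "S \<noteq> {qcoset (lprinc r (gb - 1)) 0}"
  shows "\<exists>m. S = ncoset r ` apow_ideal m"
proof -
  define T where "T = {g. ncoset r g \<in> S}"
  have S_T: "S = ncoset r ` T"
    using S unfolding qsubmodule_def T_def by (auto simp: qcarrier_ncoset)
  have T0: "0 \<in> T" using S by (simp add: T_def qsubmodule_def qcoset_ncoset)
  have Tadd: "g + h \<in> T" if "g \<in> T" "h \<in> T" for g h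
    using S that unfolding T_def qsubmodule_def by (metis mem_Collect_eq qadd_ncoset)
  have Tact: "nact r c g \<in> T" if "g \<in> T" for c g
    using S that unfolding T_def qsubmodule_def by (metis mem_Collect_eq qsmult_ncoset)
  have Tmult: "p * g \<in> T" if "g \<in> T" for p g
    using Tact[OF that, of "[:p:]"] by (simp add: nact_const)
  have TdA: "dA r g \<in> T" if "g \<in> T" for g
    using Tadd[OF that Tmult[OF Tact[OF that, of gb], of "-1"]] by (simp add: nact_gb E_def)
  have "d_stable_ideal r T" unfolding d_stable_ideal_def using T0 Tadd Tmult TdA by blast
  moreover obtain g where "g \<in> T" "g \<noteq> 0"
    using nz T0 S_T by (auto simp: qcoset_ncoset)
  ultimately show ?thesis using d_stable_ideal_is_apow[OF r] S_T by blast
qed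

lemma apow_submodule_strict_mono:
  "ncoset r ` apow_ideal (Suc m) \<subset> ncoset r ` (apow_ideal m :: 'k::field_char_0 poly set)"
proof -
  have "apow_ideal (Suc m) \<subseteq> (apow_ideal m :: 'k poly set)"
    and ne: "apow_ideal (Suc m) \<noteq> (apow_ideal m :: 'k poly set)"
    using apow_ideal_strict_mono[of m, where 'k='k] unfolding psubset_eq by simp_all
  then show ?thesis
    unfolding psubset_eq inj_image_eq_iff[OF ncoset_inj] by (simp add: image_mono)
qed

lemma not_qartinian_of_strict_chain:
  assumes "\<And>n. qsubmodule r L (S n)" and "\<And>n. S (Suc n) \<subset> S n"
  shows "\<not> qartinian r L"
proof
  assume "qartinian r L"
  then have "(\<forall>n. qsubmodule r L (S n)) \<and> (\<forall>n. S (Suc n) \<subseteq> S n) \<longrightarrow> (\<exists>k. \<forall>n\<ge>k. S n = S k)"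
    unfolding qartinian_def by (rule spec)
  moreover have "(\<forall>n. qsubmodule r L (S n)) \<and> (\<forall>n. S (Suc n) \<subseteq> S n)"
    using assms by (simp add: psubset_imp_subset)
  ultimately have "\<exists>k. \<forall>n\<ge>k. S n = S k" by (rule mp)
  then obtain k where k: "\<forall>n\<ge>k. S n = S k" ..
  have "S (Suc k) = S k" using spec[OF k, of "Suc k"] by simp
  then show False using assms(2)[of k] by simp
qed

lemma nonzero_submodules_N:
  fixes S :: "'k::field_char_0 poly poly set set"
  assumes r: "r \<ge> 1"
  shows "qsubmodule r (lprinc r (gb - 1)) S \<and> S \<noteq> {qcoset (lprinc r (gb - 1)) 0}
    \<longleftrightarrow> (\<exists>m. S = ncoset r ` apow_ideal m)"
proof
  assume "qsubmodule r (lprinc r (gb - 1)) S \<and> S \<noteq> {qcoset (lprinc r (gb - 1)) 0}"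
  then show "\<exists>m. S = ncoset r ` apow_ideal m" by (elim conjE) (rule qsubmodule_is_apow[OF r])
next
  assume "\<exists>m. S = ncoset r ` apow_ideal m"
  then obtain m where S: "S = ncoset r ` apow_ideal m" ..
  have zero: "qcoset (lprinc r (gb - 1)) 0 \<in> ncoset r ` (apow_ideal (Suc m) :: 'k poly set)"
    using qsubmodule_apow[OF r, of "Suc m"] unfolding qsubmodule_def by blast
  have sub: "ncoset r ` apow_ideal (Suc m) \<subset> S"
    unfolding S by (rule apow_submodule_strict_mono)
  have "S \<noteq> {qcoset (lprinc r (gb - 1)) 0}"
  proof
    assume "S = {qcoset (lprinc r (gb - 1)) 0}"
    then have "ncoset r ` apow_ideal (Suc m) = S" using sub zero by blast
    then show False using sub by simp
  qed
  then show "qsubmodule r (lprinc r (gb - 1)) S \<and> S \<noteq> {qcoset (lprinc r (gb - 1)) 0}"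
    using qsubmodule_apow[OF r, of m] unfolding S by simp
qed


section \<open>Part (c): the submodules a^m N are pairwise non-isomorphic\<close>

lemma N_hom_on_apow:
  fixes f :: "'k::field_char_0 poly poly set \<Rightarrow> 'k poly poly set"
  assumes r: "r \<ge> 1"
    and lin: "\<And>c X. X \<in> ncoset r ` apow_ideal m \<Longrightarrow>
      f (qsmult r (lprinc r (gb - 1)) c X) = qsmult r (lprinc r (gb - 1)) c (f X)"
    and u: "f (ncoset r ([:0,1:] ^ m)) = ncoset r u"
  shows "\<And>p. f (ncoset r (p * [:0,1:] ^ m)) = ncoset r (p * u)"
    and "dA r u = smult (of_nat m) ([:0,1:] ^ (r - 1)) * u"
proof -
  have am: "ncoset r ([:0,1:] ^ m) \<in> ncoset r ` apow_ideal m"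
    using apow_in_apow_ideal by blast
  have shift: "f (ncoset r (nact r c ([:0,1:] ^ m))) = ncoset r (nact r c u)" for c
    using lin[OF am, of c] u by (simp add: qsmult_ncoset)
  show fp: "f (ncoset r (p * [:0,1:] ^ m)) = ncoset r (p * u)" for p
    using shift[of "[:p:]"] by (simp add: nact_const)
  have "dA r ([:0,1:] ^ m) = [:0,1:] ^ m * smult (of_nat m) ([:0,1:] ^ (r - 1) :: 'k poly)"
    using dA_apow_mult[OF r, of m 1] by simp
  then have "E r ([:0,1:] ^ m)
      = (1 - smult (of_nat m) ([:0,1:] ^ (r - 1))) * ([:0,1:] ^ m :: 'k poly)"
    unfolding E_def by (simp add: algebra_simps)
  then have "ncoset r ((1 - smult (of_nat m) ([:0,1:] ^ (r - 1))) * u) = ncoset r (E r u)"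
    using shift[of gb] fp by (simp add: nact_gb)
  then show "dA r u = smult (of_nat m) ([:0,1:] ^ (r - 1)) * u"
    by (simp add: E_def algebra_simps)
qed

theorem apow_submodules_not_iso:
  assumes r: "r \<ge> 1" and mn: "m \<noteq> n"
  shows "\<not> qiso r (lprinc r (gb - 1))
    (ncoset r ` (apow_ideal m :: 'k::field_char_0 poly set)) (ncoset r ` apow_ideal n)"
proof
  let ?a = "[:0,1:] :: 'k poly"
  assume "qiso r (lprinc r (gb - 1))
    (ncoset r ` (apow_ideal m :: 'k poly set)) (ncoset r ` apow_ideal n)"
  then obtain f where bij: "bij_betw f (ncoset r ` (apow_ideal m :: 'k poly set))
      (ncoset r ` apow_ideal n)"
    and lin: "\<And>c X. X \<in> ncoset r ` (apow_ideal m :: 'k poly set) \<Longrightarrow>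
      f (qsmult r (lprinc r (gb - 1)) c X) = qsmult r (lprinc r (gb - 1)) c (f X)"
    unfolding qiso_def by blast
  have "f (ncoset r (?a ^ m)) \<in> ncoset r ` apow_ideal n"
    using bij apow_in_apow_ideal by (blast dest: bij_betw_apply)
  then obtain v where v: "f (ncoset r (?a ^ m)) = ncoset r (?a ^ n * v)"
    by (auto simp: apow_ideal_def)
  note hom = N_hom_on_apow[OF r lin v]
  txt \<open>Surjectivity: some h a^m maps to a^n, so h v = 1 and v is a nonzero constant.\<close>
  have "ncoset r (?a ^ n) \<in> f ` (ncoset r ` apow_ideal m)"
    using bij apow_in_apow_ideal[of n] by (auto simp: bij_betw_def)
  then obtain h where "ncoset r (h * (?a ^ n * v)) = ncoset r (?a ^ n)"
    using hom(1) by (auto simp: apow_ideal_def mult.commute)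
  then have "?a ^ n * (h * v) = ?a ^ n * 1" by (simp add: algebra_simps)
  then have "h * v = 1" by (subst (asm) mult_left_cancel) simp_all
  then have "h \<noteq> 0" "v \<noteq> 0" by auto
  then have "degree v = 0" using \<open>h * v = 1\<close> degree_mult_eq[of h v] by simp
  then obtain lam where lam: "v = [:lam:]" by (metis degree_eq_zeroE)
  with \<open>v \<noteq> 0\<close> have lam0: "lam \<noteq> 0" by simp
  txt \<open>Compatibility with b: d(a^n v) = n a^(r-1) a^n v must equal m a^(r-1) a^n v.\<close>
  have "dA r (?a ^ n * v) = smult (of_nat n) (?a ^ (r - 1)) * (?a ^ n * v)"
    using dA_apow_mult[OF r, of n v] lam by (simp add: algebra_simps)
  then have "smult (of_nat n - of_nat m) (?a ^ (r - 1) * ?a ^ n * v) = 0"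
    using hom(2) by (simp add: smult_diff_left algebra_simps)
  then have "(of_nat n :: 'k) = of_nat m" using lam lam0 by simp
  then show False using mn by simp
qed


theorem proposition3p5:
  fixes r :: nat and J L :: "'k::field_char_0 poly poly set" and x :: "'k poly poly"
    and aN :: "nat \<Rightarrow> 'k poly poly set set"
  assumes "r \<ge> 1"
  defines "J \<equiv> lprinc r (ga - 1)"
    and "x \<equiv> gb - 1"
    and "L \<equiv> lprinc r x"
    and "aN \<equiv> (\<lambda>m. qsmult r L (opow r ga m) ` qcarrier L)"
  shows "(maximal_left_ideal r J \<and> (\<forall>m c. omult r ((sigma r ^^ m) x) c - 1 \<notin> J))
       \<and> (\<not> qartinian r L
          \<and> (\<forall>S. (qsubmodule r L S \<and> S \<noteq> {qcoset L 0}) \<longleftrightarrow> (\<exists>m. S = aN m))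
          \<and> (\<forall>m. aN (Suc m) \<subset> aN m))
       \<and> (\<forall>m n. m \<noteq> n \<longrightarrow> \<not> qiso r L (aN m) (aN n))"
proof -
  have aN: "aN m = ncoset r ` apow_ideal m" for m
    unfolding aN_def L_def x_def by (rule a_power_submodule)
  have submodule: "qsubmodule r L (aN m)" for m
    unfolding aN L_def x_def by (rule qsubmodule_apow[OF assms(1)])
  have chain: "aN (Suc m) \<subset> aN m" for m
    unfolding aN by (rule apow_submodule_strict_mono)
  have classify: "\<forall>S. (qsubmodule r L S \<and> S \<noteq> {qcoset L 0}) \<longleftrightarrow> (\<exists>m. S = aN m)"
    unfolding aN L_def x_def by (intro allI) (rule nonzero_submodules_N[OF assms(1)])
  have part_a1: "maximal_left_ideal r J"
    unfolding J_def by (rule J_maximal)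
  have part_a2: "\<forall>m c. omult r ((sigma r ^^ m) x) c - 1 \<notin> J"
    unfolding J_def x_def by (intro allI) (rule sigma_x_not_invertible_mod_J[OF assms(1)])
  have part_c: "\<forall>m n. m \<noteq> n \<longrightarrow> \<not> qiso r L (aN m) (aN n)"
    unfolding aN L_def x_def by (intro allI impI) (rule apow_submodules_not_iso[OF assms(1)])
  show ?thesis
    by (intro conjI part_a1 part_a2 classify part_c allI chain
        not_qartinian_of_strict_chain[of r L aN, OF submodule chain])
qed

end
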